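(* Let $p_1,\dots,p_r,q_1,\dots,q_s$ be positive integers with $\sum_ip_i=\sum_jq_j$, set $k=r+s$ and $(a_1,\dots,a_k)=(p_1,\dots,p_r,-q_1,\dots,-q_s)$, and $\epsilon=(-1)^{q_1+\cdots+q_s}$. Suppose $\{1,\dots,k\}$ is a disjoint union of nonempty subsets $K_1,\dots,K_l$ such that $\sum_{i\in K_j}a_i=0$ and $\gcd\{a_i:i\in K_j\}=1$ for each $j$. Let $q$ be a prime power, $\lambda\in\mathbb{F}_q^\times$, and let $\mathcal V_\lambda(\mathbb{F}_q^\times)$ be the set of points of $\mathbb{P}^{|K_1|-1}(\mathbb{F}_q)\times\cdots\times\mathbb{P}^{|K_l|-1}(\mathbb{F}_q)$ (the $j$-th factor having homogeneous coordinates $(x_i)_{i\in K_j}$) with all coordinates nonzero satisfying $\sum_{i\in K_j}x_i=0$ for $j=1,\dots,l$ and $\lambda x_1^{a_1}\cdots x_k^{a_k}=\epsilon$. Then $$|\mathcal V_\lambda(\mathbb{F}_q^\times)|=\frac{1}{q-1}\prod_{j=1}^lQ_{|K_j|}(q)+\frac{1}{q^l(q-1)}\sum_{m=1}^{q-2}g(a_1m)\cdots g(a_km)\,\omega(\epsilon\lambda)^m,$$ where $Q_n(x)=\big((x-1)^{n-1}+(-1)^n\big)/x$.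
   Context: Fix a nontrivial additive character $\psi_q$ of $\mathbb{F}_q$, a generator $\omega$ of the character group of $\mathbb{F}_q^\times$, and $g(m)=\sum_{x\in\mathbb{F}_q^\times}\omega(x)^m\psi_q(x)$ for $m\in\mathbb{Z}$. *)

theory Defs
  imports Complex_Main "HOL-Library.FuncSet"
begin

text \<open>Finite fields are modelled by a type of class {field, finite}; q = CARD('a).\<close>

definition add_char :: "('a::{field,finite} \<Rightarrow> complex) \<Rightarrow> bool" where
  "add_char \<psi> \<longleftrightarrow> (\<forall>x y. \<psi> (x + y) = \<psi> x * \<psi> y) \<and> (\<forall>x. \<psi> x \<noteq> 0)"

text \<open>A multiplicative character of F_q^x (values at 0 are irrelevant).\<close>
definition mult_char :: "('a::{field,finite} \<Rightarrow> complex) \<Rightarrow> bool" where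
  "mult_char \<chi> \<longleftrightarrow> (\<forall>x y. x \<noteq> 0 \<longrightarrow> y \<noteq> 0 \<longrightarrow> \<chi> (x * y) = \<chi> x * \<chi> y)
                    \<and> (\<forall>x. x \<noteq> 0 \<longrightarrow> \<chi> x \<noteq> 0)"

definition char_generator :: "('a::{field,finite} \<Rightarrow> complex) \<Rightarrow> bool" where
  "char_generator \<omega> \<longleftrightarrow> mult_char \<omega> \<and>
     (\<forall>\<chi>. mult_char \<chi> \<longrightarrow> (\<exists>n::nat. \<forall>x. x \<noteq> 0 \<longrightarrow> \<chi> x = \<omega> x ^ n))"

definition gauss :: "('a::{field,finite} \<Rightarrow> complex) \<Rightarrow> ('a \<Rightarrow> complex) \<Rightarrow> int \<Rightarrow> complex" where
  "gauss \<psi> \<omega> m = (\<Sum>x \<in> UNIV - {0}. (\<omega> x) powi m * \<psi> x)"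

definition Qpoly :: "nat \<Rightarrow> complex \<Rightarrow> complex" where
  "Qpoly n x = ((x - 1) ^ (n - 1) + (-1) ^ n) / x"

definition Vsol :: "nat \<Rightarrow> (nat \<Rightarrow> int) \<Rightarrow> nat \<Rightarrow> (nat \<Rightarrow> nat set) \<Rightarrow> 'a::{field,finite} \<Rightarrow> 'a
                    \<Rightarrow> (nat \<Rightarrow> 'a) set" where
  "Vsol k a l K lam eps = {x \<in> {1..k} \<rightarrow>\<^sub>E (UNIV - {0}).
      (\<forall>j\<in>{1..l}. (\<Sum>i\<in>K j. x i) = 0) \<and> lam * (\<Prod>i\<in>{1..k}. x i powi a i) = eps}"

text \<open>Two tuples define the same point of P^{|K_1|-1} x ... x P^{|K_l|-1}
  iff they differ by independent nonzero scalings on each block.\<close>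
definition proj_rel :: "nat \<Rightarrow> (nat \<Rightarrow> nat set) \<Rightarrow> ((nat \<Rightarrow> 'a::field) \<times> (nat \<Rightarrow> 'a)) set" where
  "proj_rel l K = {(x, y). \<exists>c::nat \<Rightarrow> 'a. (\<forall>j\<in>{1..l}. c j \<noteq> 0 \<and> (\<forall>i\<in>K j. y i = c j * x i))}"

definition Vproj :: "nat \<Rightarrow> (nat \<Rightarrow> int) \<Rightarrow> nat \<Rightarrow> (nat \<Rightarrow> nat set) \<Rightarrow> 'a::{field,finite} \<Rightarrow> 'a
                    \<Rightarrow> (nat \<Rightarrow> 'a) set set" where
  "Vproj k a l K lam eps = Vsol k a l K lam eps // (proj_rel l K \<inter> (Vsol k a l K lam eps \<times> Vsol k a l K lam eps))"

end

theory Submission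
  imports Defs "HOL-Library.Cardinality" "HOL-Algebra.Multiplicative_Group"
    "HOL-Algebra.Algebraic_Closure_Type"
begin

text \<open>Both defining conditions are detected by orthogonality: the block equations
  \<Sum>_{i\<in>K_j} x_i = 0 by the additive character \<psi>, the monomial equation by the powers \<omega>^m.
  After exchanging summations the affine count factors over the blocks, each block contributing
  \<Sum>_u \<Prod>_{i\<in>K_j} \<Sum>_{y\<noteq>0} \<omega>(y)^{a_i m} \<psi>(u y). For u \<noteq> 0 the substitution y \<mapsto> y/u turns
  the product into \<Prod> g(a_i m), since \<Sum>_{i\<in>K_j} a_i = 0. The term u = 0 vanishes for
  0 < m < q - 1 by the gcd condition, while for m = 0 the block sum is q times the number
  (q - 1) Q_{|K_j|}(q) of points of the hyperplane \<Sum> x_i = 0 with nonzero coordinates. Finally the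
  torus (F_q^\<times>)^l acts freely on the affine solutions, and its orbits are the points of
  V_\<lambda>(F_q^\<times>).\<close>

section \<open>Finite fields\<close>

lemma card_nonzero_elements: "card (UNIV - {0::'a::{field,finite}}) = CARD('a) - 1"
  by (simp add: card_Diff_singleton)

lemma card_finite_field_ge_2: "CARD('a::{field,finite}) \<ge> 2"
proof -
  have "card {0::'a, 1} \<le> CARD('a)" by (rule card_mono) auto
  thus ?thesis by simp
qed

lemma finite_field_power_card_minus_1:
  assumes "(x::'a::{field,finite}) \<noteq> 0"
  shows "x ^ (CARD('a) - 1) = 1"
proof -
  let ?U = "UNIV - {0::'a}"
  have "bij_betw ((*) x) ?U ?U"
    using assms by (intro bij_betwI[where g="(*) (inverse x)"]) (auto simp: field_simps)
  hence "(\<Prod>y\<in>?U. y) = (\<Prod>y\<in>?U. x * y)"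
    using prod.reindex_bij_betw[of "(*) x" ?U ?U "\<lambda>y. y"] by simp
  also have "\<dots> = x ^ (CARD('a) - 1) * (\<Prod>y\<in>?U. y)"
    by (simp add: prod.distrib card_nonzero_elements)
  finally show ?thesis by simp
qed

lemma power_mod_order:
  fixes z :: "'b::monoid_mult"
  assumes "z ^ n = 1"
  shows "z ^ d = z ^ (d mod n)"
proof -
  have "z ^ d = z ^ (n * (d div n) + d mod n)" by simp
  also have "\<dots> = z ^ (d mod n)" by (simp only: power_add power_mult assms power_one mult_1)
  finally show ?thesis .
qed

lemma power_int_mod_order:
  fixes z :: "'b::field"
  assumes "z ^ n = 1" "n > 0"
  shows "z powi b = z ^ nat (b mod int n)"
proof -
  have z: "z \<noteq> 0" using assms by (auto simp: power_0_left)
  have "z powi b = z powi (int n * (b div int n) + b mod int n)" by simp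
  also have "\<dots> = (z powi int n) powi (b div int n) * z powi (b mod int n)"
    by (subst power_int_add) (simp_all add: z power_int_mult)
  also have "\<dots> = z ^ nat (b mod int n)"
    using assms by (simp add: power_int_def)
  finally show ?thesis .
qed

lemma finite_field_primitive_element:
  "\<exists>g::'a::{field,finite}. g \<noteq> 0 \<and> bij_betw (\<lambda>i. g ^ i) {..<CARD('a) - 1} (UNIV - {0})"
proof -
  let ?R = "ring_of_type_algebra :: 'a ring" and ?n = "CARD('a) - 1"
  have pow: "x [^]\<^bsub>?R\<^esub> i = x ^ i" for x :: 'a and i :: nat
    by (induction i) (simp_all add: ring_of_type_algebra_def nat_pow_def mult.commute)
  \<comment> \<open>qualified: Ring_Divisibility declares another mult_of\<close>
  have carrier: "carrier (Multiplicative_Group.mult_of ?R) = UNIV - {0}"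
    by (simp add: ring_of_type_algebra_def)
  have "finite (carrier ?R)" by simp
  from field.finite_field_mult_group_has_gen[OF field_from_type_algebra this]
  obtain g where "g \<in> carrier (Multiplicative_Group.mult_of ?R)"
    and "carrier (Multiplicative_Group.mult_of ?R) = {g [^]\<^bsub>?R\<^esub> i |i::nat. i \<in> UNIV}"
    by blast
  hence g: "g \<noteq> 0" and gen: "UNIV - {0} = {g ^ i |i. i \<in> UNIV}"
    unfolding carrier pow by blast+
  have img: "(\<lambda>i. g ^ i) ` {..<?n} = UNIV - {0}"
  proof
    show "UNIV - {0} \<subseteq> (\<lambda>i. g ^ i) ` {..<?n}"
    proof
      fix x :: 'a assume "x \<in> UNIV - {0}"
      then obtain i where "x = g ^ i" using gen by blast
      also have "g ^ i = g ^ (i mod ?n)"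
        by (rule power_mod_order[OF finite_field_power_card_minus_1[OF g]])
      finally have "x = g ^ (i mod ?n)" .
      moreover have "i mod ?n < ?n" using card_finite_field_ge_2[where 'a='a] by simp
      ultimately show "x \<in> (\<lambda>i. g ^ i) ` {..<?n}" by blast
    qed
  qed (use g in auto)
  hence "inj_on (\<lambda>i. g ^ i) {..<?n}"
    by (intro eq_card_imp_inj_on) (simp_all add: card_nonzero_elements)
  thus ?thesis using g img by (auto simp: bij_betw_def)
qed

lemma cis_power_eq_1_iff:
  assumes "n > 0"
  shows "cis (2 * pi / real n) ^ d = 1 \<longleftrightarrow> n dvd d"
proof
  assume "cis (2 * pi / real n) ^ d = 1"
  hence "cos (real d * (2 * pi / real n)) = 1"
    by (metis DeMoivre cis.sel(1) one_complex.sel(1))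
  then obtain N :: int where "real d * (2 * pi / real n) = real_of_int N * 2 * pi"
    unfolding cos_one_2pi_int by blast
  hence "real d = real_of_int N * real n" using assms by (simp add: field_simps)
  hence "int d = N * int n" by (metis of_int_eq_iff of_int_mult of_int_of_nat_eq)
  thus "n dvd d" by (metis dvd_triv_right int_dvd_int_iff)
next
  assume "n dvd d"
  then obtain c where "d = n * c" by blast
  hence "cis (2 * pi / real n) ^ d = cis (2 * pi * real c)"
    using assms by (simp add: DeMoivre field_simps)
  thus "cis (2 * pi / real n) ^ d = 1" by simp
qed

lemma power_int_sum:
  fixes z :: "'b::field"
  assumes "z \<noteq> 0"
  shows "z powi (\<Sum>i\<in>A. f i) = (\<Prod>i\<in>A. z powi f i)"
  by (induction A rule: infinite_finite_induct) (auto simp: power_int_add assms)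

lemma divide_eq_mult_if_square_eq_1:
  fixes e x :: "'b::field"
  assumes "e * e = 1"
  shows "x / e = e * x"
proof -
  have "e \<noteq> 0" using assms by auto
  hence "x / e = x / e * (e * e)" by (simp add: assms)
  also have "\<dots> = e * x" using \<open>e \<noteq> 0\<close> by (simp add: field_simps)
  finally show ?thesis .
qed

section \<open>Characters\<close>

lemma mult_char_mult: "mult_char \<chi> \<Longrightarrow> x \<noteq> 0 \<Longrightarrow> y \<noteq> 0 \<Longrightarrow> \<chi> (x * y) = \<chi> x * \<chi> y"
  unfolding mult_char_def by blast

lemma mult_char_nonzero: "mult_char \<chi> \<Longrightarrow> x \<noteq> 0 \<Longrightarrow> \<chi> x \<noteq> 0"
  unfolding mult_char_def by blast

lemma mult_char_one: "mult_char \<chi> \<Longrightarrow> \<chi> 1 = 1"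
  using mult_char_mult[of \<chi> 1 1] mult_char_nonzero[of \<chi> 1] by simp

lemma mult_char_power: "mult_char \<chi> \<Longrightarrow> x \<noteq> 0 \<Longrightarrow> \<chi> (x ^ n) = \<chi> x ^ n"
  by (induction n) (simp_all add: mult_char_one mult_char_mult)

lemma mult_char_inverse:
  assumes "mult_char \<chi>" "x \<noteq> 0"
  shows "\<chi> (inverse x) = inverse (\<chi> x)"
proof -
  have "\<chi> (inverse x) * \<chi> x = 1"
    using mult_char_mult[OF assms(1), of "inverse x" x] assms by (simp add: mult_char_one)
  thus ?thesis by (metis inverse_unique mult.commute)
qed

lemma mult_char_power_int: "mult_char \<chi> \<Longrightarrow> x \<noteq> 0 \<Longrightarrow> \<chi> (x powi b) = \<chi> x powi b"
  by (auto simp: power_int_def mult_char_power mult_char_inverse power_inverse)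

lemma mult_char_prod:
  assumes "mult_char \<chi>" "\<forall>i\<in>A. f i \<noteq> 0"
  shows "\<chi> (\<Prod>i\<in>A. f i) = (\<Prod>i\<in>A. \<chi> (f i))"
  using assms(2)
  by (induction A rule: infinite_finite_induct) (simp_all add: mult_char_one mult_char_mult assms(1))

lemma mult_char_power_card_minus_1:
  "mult_char \<chi> \<Longrightarrow> x \<noteq> 0 \<Longrightarrow> \<chi> x ^ (CARD('a) - 1) = 1" for x :: "'a::{field,finite}"
  by (metis mult_char_power mult_char_one finite_field_power_card_minus_1)

text \<open>The character x \<mapsto> \<zeta>^(log_g x), with \<zeta> a primitive (q-1)-th root of unity, separates
  1 from the other units, hence so does \<omega>, of which it is a power.\<close>

lemma char_generator_eq_1_iff:
  fixes \<omega> :: "'a::{field,finite} \<Rightarrow> complex"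
  assumes "char_generator \<omega>" "y \<noteq> 0"
  shows "\<omega> y = 1 \<longleftrightarrow> y = 1"
proof
  let ?n = "CARD('a) - 1"
  have n: "?n > 0" using card_finite_field_ge_2[where 'a='a] by simp
  obtain g :: 'a where g: "g \<noteq> 0" and bij: "bij_betw (\<lambda>i. g ^ i) {..<?n} (UNIV - {0})"
    using finite_field_primitive_element by blast
  define dlog where "dlog = inv_into {..<?n} (\<lambda>i. g ^ i)"
  have dlog: "dlog x < ?n" "g ^ dlog x = x" if "x \<noteq> 0" for x
    using that bij_betw_inv_into_right[OF bij] bij_betw_apply[OF bij_betw_inv_into[OF bij]]
    unfolding dlog_def by auto
  have dlog_power: "dlog (g ^ i) = i" if "i < ?n" for i
    using bij_betw_inv_into_left[OF bij] that unfolding dlog_def by simp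
  define \<zeta> where "\<zeta> = cis (2 * pi / real ?n)"
  have \<zeta>: "\<zeta> ^ ?n = 1" unfolding \<zeta>_def using cis_power_eq_1_iff[OF n] by simp
  have "mult_char (\<lambda>x. \<zeta> ^ dlog x)"
    unfolding mult_char_def
  proof (intro conjI allI impI)
    fix x y :: 'a assume x: "x \<noteq> 0" and y: "y \<noteq> 0"
    have "x * y = g ^ (dlog x + dlog y)" using dlog x y by (simp add: power_add)
    also have "\<dots> = g ^ ((dlog x + dlog y) mod ?n)"
      by (rule power_mod_order[OF finite_field_power_card_minus_1[OF g]])
    finally have "dlog (x * y) = (dlog x + dlog y) mod ?n" using dlog_power n by simp
    hence "\<zeta> ^ dlog (x * y) = \<zeta> ^ (dlog x + dlog y)"
      using power_mod_order[OF \<zeta>] by metis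
    thus "\<zeta> ^ dlog (x * y) = \<zeta> ^ dlog x * \<zeta> ^ dlog y" by (simp add: power_add)
  qed (simp add: \<zeta>_def)
  then obtain N where N: "\<And>x. x \<noteq> 0 \<Longrightarrow> \<zeta> ^ dlog x = \<omega> x ^ N"
    using assms(1) unfolding char_generator_def by blast
  assume "\<omega> y = 1"
  hence "\<zeta> ^ dlog y = 1" using N[OF assms(2)] by simp
  hence "?n dvd dlog y" using cis_power_eq_1_iff[OF n] unfolding \<zeta>_def by blast
  hence "dlog y = 0" using dlog(1)[OF assms(2)] by (auto dest: dvd_imp_le)
  thus "y = 1" using dlog(2)[OF assms(2)] by simp
next
  assume "y = 1"
  thus "\<omega> y = 1" using assms(1) mult_char_one unfolding char_generator_def by blast
qed

lemma char_generator_sum_powers: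
  fixes \<omega> :: "'a::{field,finite} \<Rightarrow> complex"
  assumes "char_generator \<omega>" "y \<noteq> 0"
  shows "(\<Sum>m<CARD('a) - 1. \<omega> y ^ m) = (if y = 1 then of_nat (CARD('a) - 1) else 0)"
proof -
  have mc: "mult_char \<omega>" using assms(1) unfolding char_generator_def by blast
  have "\<omega> y ^ (CARD('a) - 1) = 1" by (rule mult_char_power_card_minus_1[OF mc assms(2)])
  thus ?thesis
    using char_generator_eq_1_iff[OF assms] mult_char_one[OF mc] by (simp add: sum_gp_strict)
qed

lemma monomial_indicator_char_sum:
  fixes \<omega> :: "'a::{field,finite} \<Rightarrow> complex"
  assumes "char_generator \<omega>" "c \<noteq> 0" "\<forall>i\<in>I. x i \<noteq> 0"
  shows "(if c * (\<Prod>i\<in>I. x i powi a i) = 1 then 1 else 0)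
    = 1 / of_nat (CARD('a) - 1) * (\<Sum>m<CARD('a) - 1. \<omega> c ^ m * (\<Prod>i\<in>I. \<omega> (x i) powi (a i * int m)))"
proof -
  let ?y = "c * (\<Prod>i\<in>I. x i powi a i)"
  have mc: "mult_char \<omega>" using assms(1) unfolding char_generator_def by blast
  have P0: "(\<Prod>i\<in>I. x i powi a i) \<noteq> 0"
    using assms(3) by (induction I rule: infinite_finite_induct) auto
  hence "?y \<noteq> 0" using assms(2) by simp
  have "\<omega> ?y = \<omega> c * (\<Prod>i\<in>I. \<omega> (x i) powi a i)"
    using assms(2,3) P0 by (simp add: mult_char_mult[OF mc] mult_char_prod[OF mc] mult_char_power_int[OF mc])
  hence "(\<Sum>m<CARD('a) - 1. \<omega> c ^ m * (\<Prod>i\<in>I. \<omega> (x i) powi (a i * int m)))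
      = (\<Sum>m<CARD('a) - 1. \<omega> ?y ^ m)"
    by (simp add: power_mult_distrib prod_power_distrib power_int_power')
  also have "\<dots> = (if ?y = 1 then of_nat (CARD('a) - 1) else 0)"
    by (rule char_generator_sum_powers[OF assms(1) \<open>?y \<noteq> 0\<close>])
  finally show ?thesis using card_finite_field_ge_2[where 'a='a] by simp
qed

lemma char_generator_sum_power_int:
  fixes \<omega> :: "'a::{field,finite} \<Rightarrow> complex"
  assumes "char_generator \<omega>" "\<not> int (CARD('a) - 1) dvd b"
  shows "(\<Sum>y\<in>UNIV - {0}. \<omega> y powi b) = 0"
proof -
  let ?n = "CARD('a) - 1" and ?U = "UNIV - {0::'a}"
  have mc: "mult_char \<omega>" using assms(1) unfolding char_generator_def by blast
  have n: "?n > 0" using card_finite_field_ge_2[where 'a='a] by simp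
  define e where "e = nat (b mod int ?n)"
  have "0 \<le> b mod int ?n" "b mod int ?n < int ?n" "b mod int ?n \<noteq> 0"
    using assms(2) n by (simp_all add: dvd_eq_mod_eq_0)
  hence e: "0 < e" "e < ?n" unfolding e_def by linarith+
  have powi_e: "\<omega> y powi b = \<omega> y ^ e" if "y \<noteq> 0" for y
    unfolding e_def by (rule power_int_mod_order[OF mult_char_power_card_minus_1[OF mc that] n])
  obtain g :: 'a where g: "g \<noteq> 0" and bij: "bij_betw (\<lambda>i. g ^ i) {..<?n} ?U"
    using finite_field_primitive_element by blast
  have "g ^ e \<noteq> g ^ 0"
    using bij_betw_imp_inj_on[OF bij] e n by (metis inj_on_contraD lessThan_iff less_not_refl)
  hence \<omega>g: "\<omega> g ^ e \<noteq> 1"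
    using char_generator_eq_1_iff[OF assms(1)] g by (simp add: mult_char_power[OF mc, symmetric])
  have "bij_betw ((*) g) ?U ?U"
    using g by (intro bij_betwI[where g="(*) (inverse g)"]) (auto simp: field_simps)
  hence "(\<Sum>y\<in>?U. \<omega> y ^ e) = (\<Sum>y\<in>?U. \<omega> (g * y) ^ e)"
    by (rule sum.reindex_bij_betw[symmetric])
  also have "\<dots> = \<omega> g ^ e * (\<Sum>y\<in>?U. \<omega> y ^ e)"
    by (simp add: sum_distrib_left mult_char_mult[OF mc] g power_mult_distrib)
  finally have "(\<Sum>y\<in>?U. \<omega> y ^ e) = 0" using \<omega>g by (metis mult_cancel_right1 mult.commute)
  thus ?thesis by (simp add: powi_e)
qed

lemma add_char_zero: "add_char \<psi> \<Longrightarrow> \<psi> 0 = 1"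
  unfolding add_char_def by (metis add_0 mult_cancel_right1)

lemma add_char_sum: "add_char \<psi> \<Longrightarrow> \<psi> (\<Sum>i\<in>A. f i) = (\<Prod>i\<in>A. \<psi> (f i))"
  by (induction A rule: infinite_finite_induct) (auto simp: add_char_zero add_char_def)

lemma add_char_sum_dilations:
  fixes \<psi> :: "'a::{field,finite} \<Rightarrow> complex"
  assumes "add_char \<psi>" "\<exists>x. \<psi> x \<noteq> 1"
  shows "(\<Sum>t\<in>UNIV. \<psi> (t * z)) = (if z = 0 then of_nat CARD('a) else 0)"
proof (cases "z = 0")
  case True
  thus ?thesis by (simp add: add_char_zero[OF assms(1)])
next
  case False
  obtain x0 where x0: "\<psi> x0 \<noteq> 1" using assms(2) by blast
  have "bij_betw (\<lambda>t. t * z) UNIV UNIV"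
    using False by (intro bij_betwI[where g="\<lambda>t. t / z"]) auto
  hence dilate: "(\<Sum>t\<in>UNIV. \<psi> (t * z)) = (\<Sum>t\<in>UNIV. \<psi> t)"
    by (rule sum.reindex_bij_betw)
  have "(\<Sum>t\<in>UNIV. \<psi> t) = (\<Sum>t\<in>UNIV. \<psi> (t + x0))"
    by (rule sum.reindex_bij_betw[symmetric]) (intro bij_betwI[where g="\<lambda>t. t - x0"], auto)
  also have "\<dots> = \<psi> x0 * (\<Sum>t\<in>UNIV. \<psi> t)"
    using assms(1) by (simp add: add_char_def sum_distrib_left mult.commute)
  finally have "(\<Sum>t\<in>UNIV. \<psi> t) = \<psi> x0 * (\<Sum>t\<in>UNIV. \<psi> t)" .
  thus ?thesis using x0 False dilate by (metis mult_cancel_right1 mult.commute)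
qed

lemma gauss_0:
  assumes "add_char \<psi>" "\<exists>x. \<psi> x \<noteq> 1"
  shows "gauss \<psi> \<omega> 0 = -1"
proof -
  have "(\<Sum>x\<in>UNIV. \<psi> x) = \<psi> 0 + (\<Sum>x\<in>UNIV - {0}. \<psi> x)"
    by (simp add: sum.remove[of UNIV 0])
  moreover have "(\<Sum>x\<in>UNIV. \<psi> x) = 0" using add_char_sum_dilations[OF assms, of 1] by simp
  ultimately show ?thesis
    unfolding gauss_def using add_char_zero[OF assms(1)] by (simp add: add_eq_0_iff)
qed

definition gauss_scaled :: "('a::{field,finite} \<Rightarrow> complex) \<Rightarrow> ('a \<Rightarrow> complex) \<Rightarrow> int \<Rightarrow> 'a \<Rightarrow> complex"
  where "gauss_scaled \<psi> \<omega> b u = (\<Sum>y\<in>UNIV - {0}. \<omega> y powi b * \<psi> (u * y))"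

lemma gauss_scaled_zero: "add_char \<psi> \<Longrightarrow> gauss_scaled \<psi> \<omega> b 0 = (\<Sum>y\<in>UNIV - {0}. \<omega> y powi b)"
  unfolding gauss_scaled_def by (simp add: add_char_zero)

lemma gauss_scaled_nonzero:
  fixes u :: "'a::{field,finite}"
  assumes "mult_char \<omega>" "u \<noteq> 0"
  shows "gauss_scaled \<psi> \<omega> b u = \<omega> u powi (- b) * gauss \<psi> \<omega> b"
proof -
  let ?U = "UNIV - {0}"
  have "bij_betw (\<lambda>z. z / u) ?U ?U"
    using assms(2) by (intro bij_betwI[where g="(*) u"]) auto
  hence "gauss_scaled \<psi> \<omega> b u = (\<Sum>z\<in>?U. \<omega> (z / u) powi b * \<psi> (u * (z / u)))"
    unfolding gauss_scaled_def by (rule sum.reindex_bij_betw[symmetric])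
  also have "\<dots> = (\<Sum>z\<in>?U. \<omega> u powi (- b) * (\<omega> z powi b * \<psi> z))"
  proof (intro sum.cong refl)
    fix z :: 'a assume "z \<in> ?U"
    hence "\<omega> (z / u) = \<omega> z * inverse (\<omega> u)"
      using assms by (simp add: divide_inverse mult_char_mult mult_char_inverse)
    thus "\<omega> (z / u) powi b * \<psi> (u * (z / u)) = \<omega> u powi (- b) * (\<omega> z powi b * \<psi> z)"
      using assms(2) by (simp add: power_int_mult_distrib power_int_inverse power_int_minus)
  qed
  finally show ?thesis unfolding gauss_def by (simp add: sum_distrib_left)
qed

lemma sum_prod_gauss_scaled:
  fixes \<psi> \<omega> :: "'a::{field,finite} \<Rightarrow> complex"
  assumes "add_char \<psi>" "mult_char \<omega>" "(\<Sum>i\<in>I. b i) = 0"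
  shows "(\<Sum>u\<in>UNIV. \<Prod>i\<in>I. gauss_scaled \<psi> \<omega> (b i) u)
    = (\<Prod>i\<in>I. \<Sum>y\<in>UNIV - {0}. \<omega> y powi b i) + of_nat (CARD('a) - 1) * (\<Prod>i\<in>I. gauss \<psi> \<omega> (b i))"
proof -
  have "(\<Prod>i\<in>I. gauss_scaled \<psi> \<omega> (b i) u) = (\<Prod>i\<in>I. gauss \<psi> \<omega> (b i))" if u: "u \<noteq> 0" for u
  proof -
    have "(\<Prod>i\<in>I. gauss_scaled \<psi> \<omega> (b i) u)
        = \<omega> u powi (\<Sum>i\<in>I. - b i) * (\<Prod>i\<in>I. gauss \<psi> \<omega> (b i))"
      by (simp add: gauss_scaled_nonzero[OF assms(2) u] prod.distrib
          power_int_sum[OF mult_char_nonzero[OF assms(2) u]])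
    thus ?thesis using assms(3) by (simp add: sum_negf)
  qed
  thus ?thesis
    by (simp add: sum.remove[of UNIV 0] gauss_scaled_zero[OF assms(1)] card_nonzero_elements)
qed

section \<open>Projective points as torus orbits\<close>

lemma card_eq_class_card_mult_card_quotient:
  assumes "equiv A R" "finite A" "\<And>C. C \<in> A // R \<Longrightarrow> card C = n"
  shows "card A = n * card (A // R)"
proof -
  have "n * card (A // R) = card (\<Union>(A // R))"
    by (rule card_partition)
      (use assms quotient_disj[OF assms(1)] finite_quotient[OF assms(2) equiv_type[OF assms(1)]]
        in \<open>auto simp: Union_quotient\<close>)
  thus ?thesis using Union_quotient[OF assms(1)] by simp
qed

lemma equiv_proj_rel: "equiv A (proj_rel l K \<inter> A \<times> A)"
proof (rule equivI)
  show "refl_on A (proj_rel l K \<inter> A \<times> A)"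
    unfolding refl_on_def proj_rel_def by (auto intro!: exI[of _ "\<lambda>_. 1"])
  show "sym (proj_rel l K \<inter> A \<times> A)"
    unfolding proj_rel_def
    by (rule symI, clarsimp, rule_tac x="\<lambda>j. inverse (c j)" in exI) (auto simp: field_simps)
  show "trans (proj_rel l K \<inter> A \<times> A)"
    unfolding proj_rel_def
    by (rule transI, clarsimp, rule_tac x="\<lambda>j. ca j * c j" in exI) (auto simp: mult.assoc)
qed auto

locale block_partition =
  fixes k l :: nat and K :: "nat \<Rightarrow> nat set"
  assumes blocks_nonempty: "\<forall>j\<in>{1..l}. K j \<noteq> {}"
    and blocks_disjoint: "\<forall>j\<in>{1..l}. \<forall>j'\<in>{1..l}. j \<noteq> j' \<longrightarrow> K j \<inter> K j' = {}"
    and blocks_cover: "(\<Union>j\<in>{1..l}. K j) = {1..k}"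
begin

lemma block_subset: "j \<in> {1..l} \<Longrightarrow> K j \<subseteq> {1..k}"
  using blocks_cover by blast

lemma finite_block: "j \<in> {1..l} \<Longrightarrow> finite (K j)"
  using block_subset finite_subset by blast

definition block_of :: "nat \<Rightarrow> nat"
  where "block_of i = (THE j. j \<in> {1..l} \<and> i \<in> K j)"

lemma block_of_eq: "j \<in> {1..l} \<Longrightarrow> i \<in> K j \<Longrightarrow> block_of i = j"
  unfolding block_of_def by (rule the_equality) (use blocks_disjoint in blast)+

lemma block_of_mem: "i \<in> {1..k} \<Longrightarrow> block_of i \<in> {1..l} \<and> i \<in> K (block_of i)"
  using blocks_cover block_of_eq by blast

lemma prod_over_blocks: "(\<Prod>i\<in>{1..k}. f (block_of i) i) = (\<Prod>j\<in>{1..l}. \<Prod>i\<in>K j. f j i)"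
proof -
  have "(\<Prod>i\<in>{1..k}. f (block_of i) i) = (\<Prod>j\<in>{1..l}. \<Prod>i\<in>K j. f (block_of i) i)"
    unfolding blocks_cover[symmetric]
    by (rule prod.UNION_disjoint) (use finite_block blocks_disjoint in auto)
  also have "\<dots> = (\<Prod>j\<in>{1..l}. \<Prod>i\<in>K j. f j i)"
    by (intro prod.cong refl) (simp add: block_of_eq)
  finally show ?thesis .
qed

end

locale balanced_blocks = block_partition +
  fixes a :: "nat \<Rightarrow> int"
  assumes block_weights_sum_zero: "\<forall>j\<in>{1..l}. (\<Sum>i\<in>K j. a i) = 0"
begin

definition rescale :: "(nat \<Rightarrow> 'b::field) \<Rightarrow> (nat \<Rightarrow> 'b) \<Rightarrow> nat \<Rightarrow> 'b"
  where "rescale x c = restrict (\<lambda>i. c (block_of i) * x i) {1..k}"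

lemma rescale_on_block: "j \<in> {1..l} \<Longrightarrow> i \<in> K j \<Longrightarrow> rescale x c i = c j * x i"
  using block_subset[of j] block_of_eq[of j i] by (auto simp: rescale_def)

lemma prod_rescale_power_int:
  assumes "\<forall>j\<in>{1..l}. c j \<noteq> 0"
  shows "(\<Prod>i\<in>{1..k}. rescale x c i powi a i) = (\<Prod>i\<in>{1..k}. x i powi a i)"
proof -
  have "(\<Prod>i\<in>{1..k}. rescale x c i powi a i)
      = (\<Prod>i\<in>{1..k}. c (block_of i) powi a i) * (\<Prod>i\<in>{1..k}. x i powi a i)"
    by (simp add: rescale_def power_int_mult_distrib prod.distrib)
  also have "(\<Prod>i\<in>{1..k}. c (block_of i) powi a i) = (\<Prod>j\<in>{1..l}. \<Prod>i\<in>K j. c j powi a i)"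
    by (rule prod_over_blocks)
  also have "(\<Prod>j\<in>{1..l}. \<Prod>i\<in>K j. c j powi a i) = 1"
    using assms block_weights_sum_zero by (intro prod.neutral) (simp flip: power_int_sum)
  finally show ?thesis by simp
qed

lemma rescale_mem_Vsol:
  assumes x: "x \<in> Vsol k a l K lam eps" and c: "c \<in> {1..l} \<rightarrow>\<^sub>E UNIV - {0}"
  shows "rescale x c \<in> Vsol k a l K lam eps"
proof -
  have "(\<Sum>i\<in>K j. rescale x c i) = c j * (\<Sum>i\<in>K j. x i)" if "j \<in> {1..l}" for j
    using that by (simp add: rescale_on_block sum_distrib_left)
  moreover have "rescale x c \<in> {1..k} \<rightarrow>\<^sub>E UNIV - {0}"
    using x c block_of_mem unfolding Vsol_def rescale_def by (auto simp: PiE_iff)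
  moreover have "\<forall>j\<in>{1..l}. c j \<noteq> 0" using c by auto
  ultimately show ?thesis
    using x prod_rescale_power_int[of c x] unfolding Vsol_def by auto
qed

lemma proj_class_eq_rescale_image:
  assumes x: "x \<in> Vsol k a l K lam eps"
  shows "(proj_rel l K \<inter> Vsol k a l K lam eps \<times> Vsol k a l K lam eps) `` {x}
       = rescale x ` ({1..l} \<rightarrow>\<^sub>E UNIV - {0})"
proof (intro equalityI subsetI)
  fix y assume "y \<in> rescale x ` ({1..l} \<rightarrow>\<^sub>E UNIV - {0})"
  then obtain c where c: "c \<in> {1..l} \<rightarrow>\<^sub>E UNIV - {0}" and y: "y = rescale x c" by blast
  have "(x, y) \<in> proj_rel l K"
    unfolding proj_rel_def y using c by (auto simp: rescale_on_block)
  thus "y \<in> (proj_rel l K \<inter> Vsol k a l K lam eps \<times> Vsol k a l K lam eps) `` {x}"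
    using x rescale_mem_Vsol[OF x c] y by blast
next
  fix y assume "y \<in> (proj_rel l K \<inter> Vsol k a l K lam eps \<times> Vsol k a l K lam eps) `` {x}"
  then obtain c where c: "\<forall>j\<in>{1..l}. c j \<noteq> 0 \<and> (\<forall>i\<in>K j. y i = c j * x i)"
    and y: "y \<in> Vsol k a l K lam eps" unfolding proj_rel_def by blast
  have "y = rescale x (restrict c {1..l})"
  proof
    fix i show "y i = rescale x (restrict c {1..l}) i"
      using c y block_of_mem[of i] unfolding rescale_def Vsol_def by (auto simp: PiE_def extensional_def)
  qed
  moreover have "restrict c {1..l} \<in> {1..l} \<rightarrow>\<^sub>E UNIV - {0}" using c by auto
  ultimately show "y \<in> rescale x ` ({1..l} \<rightarrow>\<^sub>E UNIV - {0})" by blast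
qed

lemma inj_on_rescale:
  assumes "x \<in> {1..k} \<rightarrow>\<^sub>E UNIV - {0}"
  shows "inj_on (rescale x) ({1..l} \<rightarrow>\<^sub>E UNIV - {0})"
proof (rule inj_onI)
  fix c d assume c: "c \<in> {1..l} \<rightarrow>\<^sub>E UNIV - {0}" and d: "d \<in> {1..l} \<rightarrow>\<^sub>E UNIV - {0}"
    and eq: "rescale x c = rescale x d"
  show "c = d"
  proof (rule PiE_ext[OF c d])
    fix j assume j: "j \<in> {1..l}"
    then obtain i where i: "i \<in> K j" using blocks_nonempty by blast
    have "c j * x i = d j * x i" using eq rescale_on_block[OF j i] by metis
    moreover have "x i \<noteq> 0" using assms block_subset[OF j] i by auto
    ultimately show "c j = d j" by simp
  qed
qed

lemma card_Vsol_eq_card_Vproj: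
  fixes lam eps :: "'b::{field,finite}"
  shows "card (Vsol k a l K lam eps) = (CARD('b) - 1) ^ l * card (Vproj k a l K lam eps)"
  unfolding Vproj_def
proof (rule card_eq_class_card_mult_card_quotient[OF equiv_proj_rel])
  show "finite (Vsol k a l K lam eps)"
    by (rule finite_subset[of _ "{1..k} \<rightarrow>\<^sub>E UNIV"]) (auto simp: Vsol_def finite_PiE)
  fix C assume "C \<in> Vsol k a l K lam eps // (proj_rel l K \<inter> Vsol k a l K lam eps \<times> Vsol k a l K lam eps)"
  then obtain x where C: "C = (proj_rel l K \<inter> Vsol k a l K lam eps \<times> Vsol k a l K lam eps) `` {x}"
    and x: "x \<in> Vsol k a l K lam eps" by (rule quotientE)
  have "card C = card ({1..l} \<rightarrow>\<^sub>E UNIV - {0::'b})"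
    unfolding C proj_class_eq_rescale_image[OF x]
    by (rule card_image[OF inj_on_rescale]) (use x in \<open>simp add: Vsol_def\<close>)
  thus "card C = (CARD('b) - 1) ^ l" by (simp add: card_PiE card_nonzero_elements)
qed

end

section \<open>The character sum count\<close>

lemma Gcd_eq_1_imp_ex_not_dvd_mult:
  fixes a :: "'b \<Rightarrow> int"
  assumes "Gcd (a ` I) = 1" "\<not> N dvd int m"
  shows "\<exists>i\<in>I. \<not> N dvd a i * int m"
proof (rule ccontr)
  assume "\<not> ?thesis"
  hence "N dvd Gcd ((*) (int m) ` a ` I)"
    by (intro Gcd_greatest) (auto simp: mult.commute)
  thus False using assms by (simp add: Gcd_mult)
qed

locale zero_sum_character_sums = balanced_blocks +
  fixes \<psi> \<omega> :: "'a::{field,finite} \<Rightarrow> complex"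
  assumes add_char: "add_char \<psi>" and add_char_nontrivial: "\<exists>x. \<psi> x \<noteq> 1"
    and char_generator: "char_generator \<omega>"
    and block_weights_coprime: "\<forall>j\<in>{1..l}. Gcd (a ` K j) = 1"
begin

lemma mult_char: "mult_char \<omega>"
  using char_generator unfolding char_generator_def by blast

definition zero_sum_tuples :: "(nat \<Rightarrow> 'a) set"
  where "zero_sum_tuples = {x \<in> {1..k} \<rightarrow>\<^sub>E UNIV - {0}. \<forall>j\<in>{1..l}. (\<Sum>i\<in>K j. x i) = 0}"

definition zero_sum_char_sum :: "nat \<Rightarrow> complex"
  where "zero_sum_char_sum m = (\<Sum>x\<in>zero_sum_tuples. \<Prod>i\<in>{1..k}. \<omega> (x i) powi (a i * int m))"

lemma finite_zero_sum_tuples: "finite zero_sum_tuples"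
  by (rule finite_subset[of _ "{1..k} \<rightarrow>\<^sub>E UNIV"]) (auto simp: zero_sum_tuples_def finite_PiE)

lemma card_Vsol_eq_sum_zero_sum_char_sum:
  assumes "lam \<noteq> 0" "eps \<noteq> 0"
  shows "of_nat (card (Vsol k a l K lam eps)) = 1 / of_nat (CARD('a) - 1) *
    (\<Sum>m<CARD('a) - 1. \<omega> (lam / eps) ^ m * zero_sum_char_sum m)"
proof -
  have "Vsol k a l K lam eps = {x \<in> zero_sum_tuples. lam / eps * (\<Prod>i\<in>{1..k}. x i powi a i) = 1}"
    using assms by (auto simp: Vsol_def zero_sum_tuples_def field_simps)
  hence "of_nat (card (Vsol k a l K lam eps))
      = (\<Sum>x\<in>zero_sum_tuples. if lam / eps * (\<Prod>i\<in>{1..k}. x i powi a i) = 1 then 1 else 0 :: complex)"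
    by (simp add: sum.inter_filter[OF finite_zero_sum_tuples, symmetric])
  also have "\<dots> = (\<Sum>x\<in>zero_sum_tuples. 1 / of_nat (CARD('a) - 1) *
      (\<Sum>m<CARD('a) - 1. \<omega> (lam / eps) ^ m * (\<Prod>i\<in>{1..k}. \<omega> (x i) powi (a i * int m))))"
    using assms by (intro sum.cong refl monomial_indicator_char_sum[OF char_generator])
      (auto simp: zero_sum_tuples_def)
  also have "\<dots> = 1 / of_nat (CARD('a) - 1) * (\<Sum>m<CARD('a) - 1. \<omega> (lam / eps) ^ m * zero_sum_char_sum m)"
    unfolding zero_sum_char_sum_def by (simp only: sum_distrib_left sum.swap[of _ zero_sum_tuples])
  finally show ?thesis .
qed

lemma indicator_block_sums_zero:
  "(if \<forall>j\<in>{1..l}. (\<Sum>i\<in>K j. x i) = 0 then 1 else 0)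
    = (1 / of_nat CARD('a)) ^ l * (\<Sum>t\<in>{1..l} \<rightarrow>\<^sub>E UNIV. \<Prod>j\<in>{1..l}. \<Prod>i\<in>K j. \<psi> (t j * x i))"
proof -
  have "(if \<forall>j\<in>{1..l}. (\<Sum>i\<in>K j. x i) = 0 then 1 else 0)
      = (\<Prod>j\<in>{1..l}. if (\<Sum>i\<in>K j. x i) = 0 then 1 else 0 :: complex)"
    by (auto simp: prod_zero)
  also have "\<dots> = (\<Prod>j\<in>{1..l}. 1 / of_nat CARD('a) * (\<Sum>t\<in>UNIV. \<psi> (t * (\<Sum>i\<in>K j. x i))))"
    using card_finite_field_ge_2[where 'a='a]
    by (intro prod.cong) (simp_all add: add_char_sum_dilations[OF add_char add_char_nontrivial])
  also have "\<dots> = (1 / of_nat CARD('a)) ^ l * (\<Prod>j\<in>{1..l}. \<Sum>t\<in>UNIV. \<psi> (t * (\<Sum>i\<in>K j. x i)))"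
    by (subst prod.distrib) simp
  also have "(\<Prod>j\<in>{1..l}. \<Sum>t\<in>UNIV. \<psi> (t * (\<Sum>i\<in>K j. x i)))
      = (\<Sum>t\<in>{1..l} \<rightarrow>\<^sub>E UNIV. \<Prod>j\<in>{1..l}. \<psi> (t j * (\<Sum>i\<in>K j. x i)))"
    by (rule prod_sum_PiE) auto
  also have "\<dots> = (\<Sum>t\<in>{1..l} \<rightarrow>\<^sub>E UNIV. \<Prod>j\<in>{1..l}. \<Prod>i\<in>K j. \<psi> (t j * x i))"
    by (simp only: sum_distrib_left add_char_sum[OF add_char])
  finally show ?thesis .
qed

lemma zero_sum_char_sum_eq_prod_blocks:
  "zero_sum_char_sum m = (1 / of_nat CARD('a)) ^ l *
    (\<Prod>j\<in>{1..l}. \<Sum>u\<in>UNIV. \<Prod>i\<in>K j. gauss_scaled \<psi> \<omega> (a i * int m) u)"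
proof -
  let ?P = "{1..k} \<rightarrow>\<^sub>E UNIV - {0::'a}" and ?T = "{1..l} \<rightarrow>\<^sub>E (UNIV :: 'a set)"
  let ?f = "\<lambda>t i y. \<omega> y powi (a i * int m) * \<psi> (t (block_of i) * y)"
  have "(if \<forall>j\<in>{1..l}. (\<Sum>i\<in>K j. x i) = 0 then \<Prod>i\<in>{1..k}. \<omega> (x i) powi (a i * int m) else 0)
      = (1 / of_nat CARD('a)) ^ l * (\<Sum>t\<in>?T. \<Prod>i\<in>{1..k}. ?f t i (x i))" for x
  proof -
    have "(\<Sum>t\<in>?T. \<Prod>j\<in>{1..l}. \<Prod>i\<in>K j. \<psi> (t j * x i))
        = (\<Sum>t\<in>?T. \<Prod>i\<in>{1..k}. \<psi> (t (block_of i) * x i))"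
      by (intro sum.cong refl) (rule prod_over_blocks[symmetric])
    moreover have "(if \<forall>j\<in>{1..l}. (\<Sum>i\<in>K j. x i) = 0 then \<Prod>i\<in>{1..k}. \<omega> (x i) powi (a i * int m) else 0)
        = (if \<forall>j\<in>{1..l}. (\<Sum>i\<in>K j. x i) = 0 then 1 else 0) * (\<Prod>i\<in>{1..k}. \<omega> (x i) powi (a i * int m))"
      by simp
    ultimately show ?thesis
      unfolding indicator_block_sums_zero by (simp add: prod.distrib sum_distrib_left mult_ac)
  qed
  hence "zero_sum_char_sum m = (1 / of_nat CARD('a)) ^ l * (\<Sum>x\<in>?P. \<Sum>t\<in>?T. \<Prod>i\<in>{1..k}. ?f t i (x i))"
    unfolding zero_sum_char_sum_def zero_sum_tuples_def
    by (simp only: sum.inter_filter[OF finite_PiE] finite_atLeastAtMost finite_Diff finite_class.finite_UNIV sum_distrib_left)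
  also have "\<dots> = (1 / of_nat CARD('a)) ^ l * (\<Sum>t\<in>?T. \<Sum>x\<in>?P. \<Prod>i\<in>{1..k}. ?f t i (x i))"
    by (rule arg_cong[where f="\<lambda>z. _ * z"], rule sum.swap)
  also have "\<dots> = (1 / of_nat CARD('a)) ^ l * (\<Sum>t\<in>?T. \<Prod>i\<in>{1..k}. gauss_scaled \<psi> \<omega> (a i * int m) (t (block_of i)))"
    by (simp add: gauss_scaled_def prod_sum_PiE)
  also have "(\<Sum>t\<in>?T. \<Prod>i\<in>{1..k}. gauss_scaled \<psi> \<omega> (a i * int m) (t (block_of i)))
      = (\<Sum>t\<in>?T. \<Prod>j\<in>{1..l}. \<Prod>i\<in>K j. gauss_scaled \<psi> \<omega> (a i * int m) (t j))"
    by (intro sum.cong refl) (rule prod_over_blocks)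
  also have "\<dots> = (\<Prod>j\<in>{1..l}. \<Sum>u\<in>UNIV. \<Prod>i\<in>K j. gauss_scaled \<psi> \<omega> (a i * int m) u)"
    by (rule prod_sum_PiE[symmetric]) auto
  finally show ?thesis .
qed

lemma block_char_sum_trivial:
  assumes "j \<in> {1..l}"
  shows "(\<Sum>u\<in>UNIV. \<Prod>i\<in>K j. gauss_scaled \<psi> \<omega> (a i * int 0) u)
    = of_nat (CARD('a) - 1) * of_nat CARD('a) * Qpoly (card (K j)) (of_nat CARD('a))"
proof -
  have "card (K j) \<noteq> 0" using blocks_nonempty finite_block assms by auto
  then obtain c where c: "card (K j) = Suc c" using not0_implies_Suc by blast
  have "(\<Sum>u\<in>UNIV. \<Prod>i\<in>K j. gauss_scaled \<psi> \<omega> (a i * int 0) u)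
      = of_nat (CARD('a) - 1) ^ card (K j) + of_nat (CARD('a) - 1) * (- 1) ^ card (K j)"
    using sum_prod_gauss_scaled[OF add_char mult_char, of "\<lambda>_. 0" "K j"]
    by (simp add: gauss_0[OF add_char add_char_nontrivial] card_nonzero_elements)
  also have "\<dots> = of_nat (CARD('a) - 1) * of_nat CARD('a) * Qpoly (card (K j)) (of_nat CARD('a))"
    using card_finite_field_ge_2[where 'a='a] unfolding Qpoly_def c
    by (simp add: of_nat_diff field_simps)
  finally show ?thesis .
qed

lemma block_char_sum_nontrivial:
  assumes j: "j \<in> {1..l}" and m: "0 < m" "m < CARD('a) - 1"
  shows "(\<Sum>u\<in>UNIV. \<Prod>i\<in>K j. gauss_scaled \<psi> \<omega> (a i * int m) u)
    = of_nat (CARD('a) - 1) * (\<Prod>i\<in>K j. gauss \<psi> \<omega> (a i * int m))"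
proof -
  have "\<not> (CARD('a) - 1) dvd m" using m by (auto dest: dvd_imp_le)
  hence "\<not> int (CARD('a) - 1) dvd int m" by (simp only: int_dvd_int_iff not_False_eq_True)
  with block_weights_coprime j obtain i where i: "i \<in> K j" "\<not> int (CARD('a) - 1) dvd a i * int m"
    using Gcd_eq_1_imp_ex_not_dvd_mult by blast
  have "(\<Prod>i\<in>K j. \<Sum>y\<in>UNIV - {0}. \<omega> y powi (a i * int m)) = 0"
    by (rule prod_zero[OF finite_block[OF j]])
      (use char_generator_sum_power_int[OF char_generator i(2)] i(1) in blast)
  moreover have "(\<Sum>i\<in>K j. a i * int m) = (\<Sum>i\<in>K j. a i) * int m"
    by (rule sum_distrib_right[symmetric])
  ultimately show ?thesis
    using sum_prod_gauss_scaled[OF add_char mult_char, of "\<lambda>i. a i * int m" "K j"]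
      block_weights_sum_zero j by simp
qed

lemma zero_sum_char_sum_0:
  "zero_sum_char_sum 0 = of_nat (CARD('a) - 1) ^ l * (\<Prod>j=1..l. Qpoly (card (K j)) (of_nat CARD('a)))"
proof -
  have "zero_sum_char_sum 0 = (1 / of_nat CARD('a)) ^ l *
      (\<Prod>j\<in>{1..l}. of_nat (CARD('a) - 1) * of_nat CARD('a) * Qpoly (card (K j)) (of_nat CARD('a)))"
    unfolding zero_sum_char_sum_eq_prod_blocks by (simp only: block_char_sum_trivial cong: prod.cong)
  also have "\<dots> = (1 / of_nat CARD('a)) ^ l * ((of_nat (CARD('a) - 1) * of_nat CARD('a)) ^ l *
      (\<Prod>j\<in>{1..l}. Qpoly (card (K j)) (of_nat CARD('a))))"
    by (simp add: prod.distrib)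
  finally show ?thesis
    using card_finite_field_ge_2[where 'a='a] by (simp add: power_mult_distrib power_one_over)
qed

lemma zero_sum_char_sum_nontrivial:
  assumes "0 < m" "m < CARD('a) - 1"
  shows "zero_sum_char_sum m = (of_nat (CARD('a) - 1) / of_nat CARD('a)) ^ l *
    (\<Prod>i=1..k. gauss \<psi> \<omega> (a i * int m))"
proof -
  have "zero_sum_char_sum m = (1 / of_nat CARD('a)) ^ l *
      (\<Prod>j\<in>{1..l}. of_nat (CARD('a) - 1) * (\<Prod>i\<in>K j. gauss \<psi> \<omega> (a i * int m)))"
    unfolding zero_sum_char_sum_eq_prod_blocks
    by (simp only: block_char_sum_nontrivial[OF _ assms] cong: prod.cong)
  also have "(\<Prod>j\<in>{1..l}. of_nat (CARD('a) - 1) * (\<Prod>i\<in>K j. gauss \<psi> \<omega> (a i * int m)))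
      = of_nat (CARD('a) - 1) ^ l * (\<Prod>j\<in>{1..l}. \<Prod>i\<in>K j. gauss \<psi> \<omega> (a i * int m))"
    by (simp add: prod.distrib)
  also have "(\<Prod>j\<in>{1..l}. \<Prod>i\<in>K j. gauss \<psi> \<omega> (a i * int m)) = (\<Prod>i=1..k. gauss \<psi> \<omega> (a i * int m))"
    by (rule prod_over_blocks[symmetric])
  finally show ?thesis by (simp add: power_divide)
qed

theorem card_Vsol_formula:
  assumes "lam \<noteq> 0" "eps \<noteq> 0"
  shows "of_nat (card (Vsol k a l K lam eps)) = of_nat (CARD('a) - 1) ^ l *
    (1 / (of_nat CARD('a) - 1) * (\<Prod>j=1..l. Qpoly (card (K j)) (of_nat CARD('a)))
     + 1 / (of_nat CARD('a) ^ l * (of_nat CARD('a) - 1)) *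
       (\<Sum>m=1..CARD('a) - 2. (\<Prod>i=1..k. gauss \<psi> \<omega> (a i * int m)) * \<omega> (lam / eps) ^ m))"
proof -
  have q: "CARD('a) \<ge> 2" by (rule card_finite_field_ge_2)
  have n: "(of_nat (CARD('a) - 1) :: complex) = of_nat CARD('a) - 1"
    using q by (simp add: of_nat_diff)
  have "{..<CARD('a) - 1} = insert 0 {1..CARD('a) - 2}" using q by auto
  hence "(\<Sum>m<CARD('a) - 1. \<omega> (lam / eps) ^ m * zero_sum_char_sum m)
      = zero_sum_char_sum 0 + (\<Sum>m=1..CARD('a) - 2. \<omega> (lam / eps) ^ m * zero_sum_char_sum m)"
    by simp
  also have "(\<Sum>m=1..CARD('a) - 2. \<omega> (lam / eps) ^ m * zero_sum_char_sum m)
      = (of_nat (CARD('a) - 1) / of_nat CARD('a)) ^ l *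
        (\<Sum>m=1..CARD('a) - 2. (\<Prod>i=1..k. gauss \<psi> \<omega> (a i * int m)) * \<omega> (lam / eps) ^ m)"
    unfolding sum_distrib_left
  proof (intro sum.cong refl)
    fix m assume "m \<in> {1..CARD('a) - 2}"
    hence "0 < m" "m < CARD('a) - 1" using q by auto
    thus "\<omega> (lam / eps) ^ m * zero_sum_char_sum m = (of_nat (CARD('a) - 1) / of_nat CARD('a)) ^ l *
        ((\<Prod>i=1..k. gauss \<psi> \<omega> (a i * int m)) * \<omega> (lam / eps) ^ m)"
      by (simp add: zero_sum_char_sum_nontrivial)
  qed
  finally have sum: "(\<Sum>m<CARD('a) - 1. \<omega> (lam / eps) ^ m * zero_sum_char_sum m)
      = (of_nat CARD('a) - 1) ^ l * (\<Prod>j=1..l. Qpoly (card (K j)) (of_nat CARD('a)))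
        + ((of_nat CARD('a) - 1) / of_nat CARD('a)) ^ l *
          (\<Sum>m=1..CARD('a) - 2. (\<Prod>i=1..k. gauss \<psi> \<omega> (a i * int m)) * \<omega> (lam / eps) ^ m)"
    by (simp only: zero_sum_char_sum_0 n)
  have "1 / y * (y ^ l * P + (y / x) ^ l * S) = y ^ l * (1 / y * P + 1 / (x ^ l * y) * S)"
    if "x \<noteq> 0" "y \<noteq> 0" for x y P S :: complex
    using that by (simp add: field_simps power_divide)
  from this[of "of_nat CARD('a)" "of_nat CARD('a) - 1"] show ?thesis
    unfolding card_Vsol_eq_sum_zero_sum_char_sum[OF assms] n sum using q by simp
qed

end

theorem mainTheorem17:
  fixes \<psi> \<omega> :: "'a::{field,finite} \<Rightarrow> complex"
    and r s l :: nat and p qq :: "nat \<Rightarrow> nat" and K :: "nat \<Rightarrow> nat set" and lam :: 'a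
  assumes "add_char \<psi>" and "\<exists>x. \<psi> x \<noteq> 1"
    and "char_generator \<omega>"
    and "\<forall>i\<in>{1..r}. p i > 0" and "\<forall>j\<in>{1..s}. qq j > 0"
    and "(\<Sum>i=1..r. p i) = (\<Sum>j=1..s. qq j)"
    and "\<forall>j\<in>{1..l}. K j \<noteq> {}"
    and "\<forall>j\<in>{1..l}. \<forall>j'\<in>{1..l}. j \<noteq> j' \<longrightarrow> K j \<inter> K j' = {}"
    and "(\<Union>j\<in>{1..l}. K j) = {1..r+s}"
    and "\<forall>j\<in>{1..l}. (\<Sum>i\<in>K j. (\<lambda>i. if i \<le> r then int (p i) else - int (qq (i - r))) i) = 0"
    and "\<forall>j\<in>{1..l}. Gcd ((\<lambda>i. if i \<le> r then int (p i) else - int (qq (i - r))) ` K j) = 1"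
    and "lam \<noteq> 0"
  shows "(let k = r + s; a = (\<lambda>i. if i \<le> r then int (p i) else - int (qq (i - r)));
              \<epsilon> = (-1::'a) ^ (\<Sum>j=1..s. qq j); q = (of_nat (card (UNIV::'a set)) :: complex) in
          of_nat (card (Vproj k a l K lam \<epsilon>)) =
            1 / (q - 1) * (\<Prod>j=1..l. Qpoly (card (K j)) q)
            + 1 / (q ^ l * (q - 1)) *
              (\<Sum>m=1..card (UNIV::'a set) - 2. (\<Prod>i=1..k. gauss \<psi> \<omega> (a i * int m)) * \<omega> (\<epsilon> * lam) ^ m))"
proof -
  define a where "a = (\<lambda>i. if i \<le> r then int (p i) else - int (qq (i - r)))"
  define \<epsilon> where "\<epsilon> = (-1::'a) ^ (\<Sum>j=1..s. qq j)"
  interpret zero_sum_character_sums "r + s" l K a \<psi> \<omega>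
    by unfold_locales (use assms in \<open>simp_all add: a_def\<close>)
  have "\<epsilon> * \<epsilon> = 1" unfolding \<epsilon>_def by (simp flip: power_add)
  hence \<epsilon>: "\<epsilon> \<noteq> 0" "lam / \<epsilon> = \<epsilon> * lam"
    by (auto simp: divide_eq_mult_if_square_eq_1)
  have "(of_nat (CARD('a) - 1) :: complex) ^ l * of_nat (card (Vproj (r + s) a l K lam \<epsilon>))
      = of_nat (card (Vsol (r + s) a l K lam \<epsilon>))"
    by (simp add: card_Vsol_eq_card_Vproj)
  also have "\<dots> = of_nat (CARD('a) - 1) ^ l *
    (1 / (of_nat CARD('a) - 1) * (\<Prod>j=1..l. Qpoly (card (K j)) (of_nat CARD('a)))
     + 1 / (of_nat CARD('a) ^ l * (of_nat CARD('a) - 1)) *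
       (\<Sum>m=1..CARD('a) - 2. (\<Prod>i=1..r + s. gauss \<psi> \<omega> (a i * int m)) * \<omega> (\<epsilon> * lam) ^ m))"
    using card_Vsol_formula[OF assms(12) \<epsilon>(1)] unfolding \<epsilon>(2) .
  finally show ?thesis
    using card_finite_field_ge_2[where 'a='a] unfolding Let_def a_def \<epsilon>_def by simp
qed

end
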